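(* Every strip $S\subset\mathbb{R}^2$ is foliated homeomorphic to a model strip; that is, there exist a model strip $S'$ and a homeomorphism $h:S\to S'$ mapping each leaf of the canonical foliation of $S$ onto a leaf of the canonical foliation of $S'$.
   Context: A subset $S\subset\mathbb{R}^2$ is a strip if for some real numbers $u<v$ one has $\mathbb{R}\times(u,v)\subset S\subset\mathbb{R}\times[u,v]$ and $S$ is open in the topology of $\mathbb{R}\times[u,v]$. Put $\partial_-S=S\cap(\mathbb{R}\times\{u\})$, $\partial_+S=S\cap(\mathbb{R}\times\{v\})$, $\partial S=\partial_-S\cup\partial_+S$; $\partial S$ is a disjoint union of at most countably many open (possibly unbounded) horizontal intervals, called boundary intervals. A strip is a model strip if in addition every connected component of $\partial S$ is a bounded interval and the closures in $\mathbb{R}\times[u,v]$ of distinct boundary intervals are mutually disjoint. The canonical foliation of a strip $S$ has as leaves the horizontal lines $\mathbb{R}\times\{t\}$, $t\in(u,v)$, and the boundary intervals of $\partial S$. A homeomorphism between foliated surfaces is foliated if it maps each leaf onto a leaf. *)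

theory Defs
  imports "HOL-Analysis.Analysis"
begin

text \<open>Points of the plane are pairs (x, y) :: real \<times> real (Euclidean product topology).
  A strip is described together with its (uniquely determined) bounds u < v.\<close>

definition is_strip :: "real \<Rightarrow> real \<Rightarrow> (real \<times> real) set \<Rightarrow> bool" where
  "is_strip u v S \<longleftrightarrow> u < v \<and> UNIV \<times> {u<..<v} \<subseteq> S \<and> S \<subseteq> UNIV \<times> {u..v}
     \<and> openin (top_of_set (UNIV \<times> {u..v})) S"

definition lower_boundary :: "real \<Rightarrow> (real \<times> real) set \<Rightarrow> (real \<times> real) set" where
  "lower_boundary u S = S \<inter> (UNIV \<times> {u})"

definition upper_boundary :: "real \<Rightarrow> (real \<times> real) set \<Rightarrow> (real \<times> real) set" where
  "upper_boundary v S = S \<inter> (UNIV \<times> {v})"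

definition strip_boundary :: "real \<Rightarrow> real \<Rightarrow> (real \<times> real) set \<Rightarrow> (real \<times> real) set" where
  "strip_boundary u v S = lower_boundary u S \<union> upper_boundary v S"

definition boundary_intervals :: "real \<Rightarrow> real \<Rightarrow> (real \<times> real) set \<Rightarrow> (real \<times> real) set set" where
  "boundary_intervals u v S = components (strip_boundary u v S)"

definition is_model_strip :: "real \<Rightarrow> real \<Rightarrow> (real \<times> real) set \<Rightarrow> bool" where
  "is_model_strip u v S \<longleftrightarrow> is_strip u v S
     \<and> (\<forall>I \<in> boundary_intervals u v S. bounded I)
     \<and> (\<forall>I \<in> boundary_intervals u v S. \<forall>J \<in> boundary_intervals u v S.
          I \<noteq> J \<longrightarrow> closure I \<inter> closure J = {})"

definition canonical_leaves :: "real \<Rightarrow> real \<Rightarrow> (real \<times> real) set \<Rightarrow> (real \<times> real) set set" where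
  "canonical_leaves u v S = {UNIV \<times> {t} | t. u < t \<and> t < v} \<union> boundary_intervals u v S"

definition foliated_homeomorphism ::
  "(real \<times> real) set set \<Rightarrow> (real \<times> real) set set \<Rightarrow> (real \<times> real) set \<Rightarrow> (real \<times> real) set
    \<Rightarrow> ((real \<times> real) \<Rightarrow> (real \<times> real)) \<Rightarrow> bool" where
  "foliated_homeomorphism F F' S S' h \<longleftrightarrow>
     (\<exists>g. homeomorphism S S' h g) \<and> (\<forall>L \<in> F. h ` L \<in> F')"

end

theory Submission
  imports Defs
begin

text \<open>The two sides of a strip are open sets \<open>A\<close> (at height \<open>u\<close>) and \<open>B\<close> (at height \<open>v\<close>)
  of the line. The strictly increasing map \<open>edge_map D = squash + gap_sup D\<close> is a translate
  of \<open>squash\<close> on every component of \<open>D\<close> and skips the value \<open>2 * squash p\<close> for every \<open>p \<notin> D\<close>,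
  so it carries \<open>D\<close> onto a bounded open set whose components have pairwise disjoint closures.
  On the level \<open>t\<close> we interpolate between \<open>edge_map A\<close> and \<open>edge_map B\<close>, replacing \<open>gap_sup\<close> by
  a Lipschitz envelope whose slope tends to infinity at the sides (so that the interpolation is
  continuous up to the boundary), and add \<open>(t - u) * (v - t) * x\<close> so that every interior line is
  mapped onto itself. The resulting level-preserving injection extends continuously to an open
  neighbourhood of the strip, so invariance of domain makes it a homeomorphism onto a model strip.\<close>

section \<open>Collapsing the complement of an open set of reals\<close>

definition squash :: "real \<Rightarrow> real" where
  "squash x = x / (1 + \<bar>x\<bar>)"

lemma abs_squash_less: "\<bar>squash x\<bar> < 1"
  unfolding squash_def by (auto simp: abs_if divide_simps)

lemma strict_mono_squash: "strict_mono squash"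
proof (rule strict_monoI)
  fix x y :: real assume "x < y"
  have "x * (1 + \<bar>y\<bar>) < y * (1 + \<bar>x\<bar>)"
  proof (cases "0 \<le> x")
    case True
    then show ?thesis using \<open>x < y\<close> by (simp add: algebra_simps)
  next
    case False
    then show ?thesis
      using \<open>x < y\<close> mult_nonpos_nonneg[of x y] by (cases "0 \<le> y") (auto simp: algebra_simps)
  qed
  then show "squash x < squash y"
    unfolding squash_def by (simp add: divide_simps add_pos_nonneg)
qed

lemma continuous_on_squash: "continuous_on X squash"
  unfolding squash_def by (intro continuous_intros) (auto simp: abs_if)

definition gap_sup :: "real set \<Rightarrow> real \<Rightarrow> real" where
  "gap_sup D x = Sup (insert (-1) (squash ` {q. q \<notin> D \<and> q < x}))"

lemma bdd_above_squash_image: "bdd_above (insert c (squash ` X))"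
proof (rule bdd_aboveI)
  fix y assume "y \<in> insert c (squash ` X)"
  then show "y \<le> max c 1"
    using abs_squash_less by (auto simp: abs_less_iff less_imp_le le_max_iff_disj)
qed

lemma squash_le_gap_sup: "q \<notin> D \<Longrightarrow> q < x \<Longrightarrow> squash q \<le> gap_sup D x"
  unfolding gap_sup_def by (rule cSup_upper[OF _ bdd_above_squash_image]) auto

lemma gap_sup_ge: "-1 \<le> gap_sup D x"
  unfolding gap_sup_def by (rule cSup_upper[OF _ bdd_above_squash_image]) auto

lemma gap_sup_le_squash: "gap_sup D x \<le> squash x"
  unfolding gap_sup_def using abs_squash_less[of x] strict_mono_squash
  by (intro cSup_least) (auto simp: abs_less_iff strict_mono_less intro: less_imp_le)

lemma abs_gap_sup_le: "\<bar>gap_sup D x\<bar> \<le> 1"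
  using gap_sup_ge[of D x] gap_sup_le_squash[of D x] abs_squash_less[of x] by linarith

lemma mono_gap_sup: "mono (gap_sup D)"
  unfolding gap_sup_def by (intro monoI cSup_subset_mono bdd_above_squash_image) auto

lemma gap_sup_eq_on_connected:
  assumes "connected C" "C \<subseteq> D" "x \<in> C" "y \<in> C"
  shows "gap_sup D x = gap_sup D y"
proof -
  have "gap_sup D x = gap_sup D y" if "x \<le> y" "x \<in> C" "y \<in> C" for x y
  proof -
    have "q < x" if "q \<notin> D" "q < y" for q
    proof (rule ccontr)
      assume "\<not> q < x"
      then have "q \<in> C"
        using connectedD_interval[OF assms(1) \<open>x \<in> C\<close> \<open>y \<in> C\<close>, of q] \<open>q < y\<close> by simp
      then show False using assms(2) \<open>q \<notin> D\<close> by blast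
    qed
    then have "{q. q \<notin> D \<and> q < x} = {q. q \<notin> D \<and> q < y}"
      using \<open>x \<le> y\<close> by force
    then show ?thesis by (simp add: gap_sup_def)
  qed
  then show ?thesis using assms(3,4) by (metis linorder_le_cases)
qed

lemma gap_sup_locally_const:
  assumes "open D" "x \<in> D"
  obtains e where "e > 0" "\<And>y. y \<in> ball x e \<Longrightarrow> gap_sup D y = gap_sup D x"
proof -
  obtain e where e: "e > 0" "ball x e \<subseteq> D"
    using assms openE by blast
  moreover have "gap_sup D y = gap_sup D x" if "y \<in> ball x e" for y
    using gap_sup_eq_on_connected[OF connected_ball e(2) that] e(1) by simp
  ultimately show ?thesis
    using that by blast
qed

definition edge_map :: "real set \<Rightarrow> real \<Rightarrow> real" where
  "edge_map D x = squash x + gap_sup D x"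

lemma strict_mono_edge_map: "strict_mono (edge_map D)"
proof (rule strict_monoI)
  fix x y :: real assume "x < y"
  then have "squash x < squash y" "gap_sup D x \<le> gap_sup D y"
    using strict_monoD[OF strict_mono_squash] monoD[OF mono_gap_sup] by auto
  then show "edge_map D x < edge_map D y"
    unfolding edge_map_def by linarith
qed

lemma abs_edge_map_le: "\<bar>edge_map D x\<bar> \<le> 2"
  unfolding edge_map_def using abs_squash_less[of x] abs_gap_sup_le[of D x] by linarith

lemma continuous_on_edge_map:
  assumes "open D"
  shows "continuous_on D (edge_map D)"
proof (rule continuous_at_imp_continuous_on, rule ballI)
  fix x assume "x \<in> D"
  then obtain e where e: "e > 0" "\<And>y. y \<in> ball x e \<Longrightarrow> gap_sup D y = gap_sup D x"
    using gap_sup_locally_const[OF assms] by blast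
  have "isCont (\<lambda>y. squash y + gap_sup D x) x"
    using continuous_on_squash[of UNIV] by (intro continuous_intros) (simp add: continuous_on_eq_continuous_at)
  then show "isCont (edge_map D) x"
  proof (rule continuous_transform_within[OF _ e(1) UNIV_I])
    fix y assume "dist y x < e"
    then show "squash y + gap_sup D x = edge_map D y"
      using e(2)[of y] by (simp add: edge_map_def dist_commute)
  qed
qed

lemma edge_map_above_gap: "p \<notin> D \<Longrightarrow> p < x \<Longrightarrow> 2 * squash p < edge_map D x"
  unfolding edge_map_def using squash_le_gap_sup[of p D x] strict_mono_less[OF strict_mono_squash, of p x]
  by linarith

lemma components_homeomorphic_image:
  assumes "homeomorphism S T f g"
  shows "components T = image f ` components S"
proof -
  have "T = f ` S"
    using assms by (simp add: homeomorphism_def)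
  then have "components T = (\<lambda>x. connected_component_set T (f x)) ` S"
    by (simp add: components_def image_image)
  also have "\<dots> = (\<lambda>x. f ` connected_component_set S x) ` S"
    using connected_component_set_homeomorphism[OF assms] by simp
  finally show ?thesis
    by (simp add: components_def image_image)
qed

lemma connected_real_below:
  fixes a p :: real
  assumes "connected C" "a \<in> C" "a < p" "p \<notin> C"
  shows "C \<subseteq> {..<p}"
proof
  fix x assume "x \<in> C"
  show "x \<in> {..<p}"
  proof (rule ccontr)
    assume "x \<notin> {..<p}"
    then have "p \<in> C"
      using connectedD_interval[OF assms(1,2) \<open>x \<in> C\<close>, of p] assms(3) by simp
    then show False using assms(4) by simp
  qed
qed

lemma connected_real_above:
  fixes a p :: real
  assumes "connected C" "a \<in> C" "p < a" "p \<notin> C"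
  shows "C \<subseteq> {p<..}"
proof
  fix x assume "x \<in> C"
  show "x \<in> {p<..}"
  proof (rule ccontr)
    assume "x \<notin> {p<..}"
    then have "p \<in> C"
      using connectedD_interval[OF assms(1) \<open>x \<in> C\<close> assms(2), of p] assms(3) by simp
    then show False using assms(4) by simp
  qed
qed

lemma homeomorphism_edge_map:
  assumes "open D"
  shows "homeomorphism D (edge_map D ` D) (edge_map D) (inv_into D (edge_map D))"
proof -
  have "inj_on (edge_map D) D"
    using strict_mono_edge_map strict_mono_imp_inj_on by blast
  then show ?thesis
    using assms continuous_on_edge_map[OF assms]
    by (intro homeomorphismI continuous_on_inverse_open) auto
qed

lemma open_edge_map_image: "open D \<Longrightarrow> open (edge_map D ` D)"
  using strict_mono_edge_map strict_mono_imp_inj_on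
  by (intro invariance_of_domain continuous_on_edge_map) blast+

lemma bounded_edge_map_image: "bounded (edge_map D ` X)"
  using abs_edge_map_le by (intro boundedI[of _ 2]) auto

lemma components_edge_map_image:
  "open D \<Longrightarrow> components (edge_map D ` D) = image (edge_map D) ` components D"
  using components_homeomorphic_image[OF homeomorphism_edge_map] .

lemma notin_between_components:
  fixes D :: "real set"
  assumes C: "C \<in> components D" and C': "C' \<in> components D" "C \<noteq> C'"
    and "a \<in> C" "b \<in> C'" "a < b"
  obtains p where "a < p" "p < b" "p \<notin> D"
proof -
  have "\<exists>p. a < p \<and> p < b \<and> p \<notin> D"
  proof (rule ccontr)
    assume "\<nexists>p. a < p \<and> p < b \<and> p \<notin> D"
    moreover have "a \<in> D" "b \<in> D"
      using \<open>a \<in> C\<close> \<open>b \<in> C'\<close> in_components_subset[OF C] in_components_subset[OF C'(1)] by auto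
    ultimately have "{a..b} \<subseteq> D"
      by (auto simp: order_le_less)
    then have "C = C'"
      using \<open>a \<in> C\<close> \<open>b \<in> C'\<close> \<open>a < b\<close> C C'(1)
      by (intro joinable_components_eq[of "{a..b}" D]) auto
    then show False
      using C'(2) by blast
  qed
  then show ?thesis
    using that by blast
qed

lemma closure_edge_map_components_disjoint:
  assumes C: "C \<in> components D" and C': "C' \<in> components D" "C \<noteq> C'"
    and "a \<in> C" "b \<in> C'" "a < b"
  shows "closure (edge_map D ` C) \<inter> closure (edge_map D ` C') = {}"
proof -
  obtain p where p: "a < p" "p < b" "p \<notin> D"
    using notin_between_components[OF assms] .
  have "p \<notin> C" "p \<notin> C'"
    using p(3) in_components_subset[OF C] in_components_subset[OF C'(1)] by auto
  then have below: "C \<subseteq> {..<p}" and above: "C' \<subseteq> {p<..}"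
    using connected_real_below[OF in_components_connected[OF C] \<open>a \<in> C\<close> p(1)]
      connected_real_above[OF in_components_connected[OF C'(1)] \<open>b \<in> C'\<close> p(2)] by auto
  define K where "K = squash p + gap_sup D a"
  have "edge_map D ` C \<subseteq> {..K}"
  proof (rule image_subsetI)
    fix x assume "x \<in> C"
    then have "gap_sup D x = gap_sup D a"
      using gap_sup_eq_on_connected[OF in_components_connected[OF C] in_components_subset[OF C]]
        \<open>a \<in> C\<close> by blast
    moreover have "squash x < squash p"
      using below \<open>x \<in> C\<close> strict_monoD[OF strict_mono_squash] by auto
    ultimately show "edge_map D x \<in> {..K}"
      by (simp add: edge_map_def K_def)
  qed
  then have "closure (edge_map D ` C) \<subseteq> {..K}"
    by (simp add: closure_minimal)
  moreover have "edge_map D ` C' \<subseteq> {2 * squash p..}"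
    using above edge_map_above_gap[OF p(3)] by (auto intro: less_imp_le)
  then have "closure (edge_map D ` C') \<subseteq> {2 * squash p..}"
    by (simp add: closure_minimal)
  moreover have "K < 2 * squash p"
    using gap_sup_le_squash[of D a] strict_monoD[OF strict_mono_squash p(1)] by (simp add: K_def)
  ultimately show ?thesis
    by (auto simp: subset_iff) (meson le_less_trans not_le)
qed

lemma pairwise_disjoint_closure_edge_components:
  assumes "open D"
  shows "pairwise (\<lambda>I J. closure I \<inter> closure J = {}) (components (edge_map D ` D))"
  unfolding components_edge_map_image[OF assms] pairwise_image
proof (intro pairwiseI impI)
  fix C C' assume C: "C \<in> components D" and C': "C' \<in> components D" and "C \<noteq> C'"
  obtain a b where "a \<in> C" "b \<in> C'"
    using C C' in_components_nonempty by blast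
  moreover have "a \<noteq> b"
    using calculation C C' \<open>C \<noteq> C'\<close> components_eq by blast
  ultimately show "closure (edge_map D ` C) \<inter> closure (edge_map D ` C') = {}"
    using closure_edge_map_components_disjoint[OF C C' \<open>C \<noteq> C'\<close>]
      closure_edge_map_components_disjoint[OF C' C \<open>C \<noteq> C'\<close>[symmetric]]
    by (metis Int_commute linorder_neq_iff)
qed

section \<open>Lipschitz envelopes\<close>

definition lip_envelope :: "(real \<Rightarrow> real) \<Rightarrow> real \<Rightarrow> real \<Rightarrow> real" where
  "lip_envelope f lam x = (SUP y. f y - lam * \<bar>x - y\<bar>)"

locale bounded_real_fun =
  fixes f :: "real \<Rightarrow> real" and c :: real
  assumes abs_le_bound: "\<bar>f y\<bar> \<le> c"
begin

lemma bound_nonneg: "0 \<le> c"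
  using abs_le_bound[of 0] by linarith

lemma bdd_above_envelope_range:
  assumes "lam \<ge> 0"
  shows "bdd_above (range (\<lambda>y. f y - lam * \<bar>x - y\<bar>))"
proof (rule bdd_aboveI2)
  fix y
  show "f y - lam * \<bar>x - y\<bar> \<le> c"
    using abs_le_bound[of y] assms by (smt (verit) mult_nonneg_nonneg abs_ge_zero)
qed

lemma lip_envelope_upper: "lam \<ge> 0 \<Longrightarrow> f y - lam * \<bar>x - y\<bar> \<le> lip_envelope f lam x"
  unfolding lip_envelope_def by (rule cSUP_upper[OF UNIV_I bdd_above_envelope_range])

lemma lip_envelope_least: "(\<And>y. f y - lam * \<bar>x - y\<bar> \<le> b) \<Longrightarrow> lip_envelope f lam x \<le> b"
  unfolding lip_envelope_def by (rule cSUP_least) auto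

lemma lip_envelope_ge: "lam \<ge> 0 \<Longrightarrow> f x \<le> lip_envelope f lam x"
  using lip_envelope_upper[of lam x x] by simp

lemma abs_lip_envelope_le: "lam \<ge> 0 \<Longrightarrow> \<bar>lip_envelope f lam x\<bar> \<le> c"
proof -
  assume "lam \<ge> 0"
  then have "lip_envelope f lam x \<le> c"
    using abs_le_bound by (intro lip_envelope_least) (smt (verit) mult_nonneg_nonneg abs_ge_zero)
  moreover have "- c \<le> lip_envelope f lam x"
    using lip_envelope_ge[OF \<open>lam \<ge> 0\<close>, of x] abs_le_bound[of x] by linarith
  ultimately show ?thesis by linarith
qed

lemma mono_lip_envelope:
  assumes "mono f" "lam \<ge> 0"
  shows "mono (lip_envelope f lam)"
proof (rule monoI, rule lip_envelope_least)
  fix x x' y :: real assume "x \<le> x'"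
  show "f y - lam * \<bar>x - y\<bar> \<le> lip_envelope f lam x'"
  proof (cases "x' \<le> y")
    case True
    then have "lam * \<bar>x' - y\<bar> \<le> lam * \<bar>x - y\<bar>"
      using \<open>x \<le> x'\<close> assms(2) by (intro mult_left_mono) auto
    then show ?thesis using lip_envelope_upper[OF assms(2), of y x'] by linarith
  next
    case False
    then have "f y \<le> f x'" using assms(1) by (simp add: monoD)
    moreover have "0 \<le> lam * \<bar>x - y\<bar>" using assms(2) by simp
    ultimately show ?thesis
      using lip_envelope_ge[OF assms(2), of x'] by linarith
  qed
qed

text \<open>Near a point where \<open>f\<close> is locally constant, the envelope with a steep enough cone agrees
  with \<open>f\<close>: the cone \<open>lam * \<bar>x - y\<bar>\<close> outweighs the oscillation \<open>2 * c\<close> of \<open>f\<close> outside the plateau.\<close>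
lemma lip_envelope_eq_plateau:
  assumes plateau: "\<And>y. \<bar>y - x0\<bar> < 2 * e \<Longrightarrow> f y = f x0"
    and "e > 0" "lam \<ge> 2 * c / e" "\<bar>x - x0\<bar> < e"
  shows "lip_envelope f lam x = f x0"
proof (rule antisym)
  have "0 \<le> 2 * c / e"
    using assms(2) bound_nonneg by simp
  then have lam: "lam \<ge> 0"
    using assms(3) by linarith
  show "lip_envelope f lam x \<le> f x0"
  proof (rule lip_envelope_least)
    fix y
    show "f y - lam * \<bar>x - y\<bar> \<le> f x0"
    proof (cases "\<bar>y - x0\<bar> < 2 * e")
      case True
      then show ?thesis using plateau[OF True] lam by simp
    next
      case False
      then have "e \<le> \<bar>x - y\<bar>" using assms(4) by linarith
      then have "2 * c / e * e \<le> lam * \<bar>x - y\<bar>"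
        using assms(2,3) lam by (intro mult_mono) auto
      then have "2 * c \<le> lam * \<bar>x - y\<bar>" using assms(2) by simp
      then show ?thesis using abs_le_bound[of y] abs_le_bound[of x0] by linarith
    qed
  qed
  have "f x = f x0"
    by (rule plateau) (use assms(2,4) in linarith)
  then show "f x0 \<le> lip_envelope f lam x"
    using lip_envelope_ge[OF lam, of x] by simp
qed

lemma lip_envelope_le_shift:
  assumes "lam > 0" "lam' > 0"
  shows "lip_envelope f lam x \<le> lip_envelope f lam' x' + lam * \<bar>x - x'\<bar> + 2 * c * \<bar>lam - lam'\<bar> / lam"
proof (rule lip_envelope_least)
  fix y
  have cone: "lam * \<bar>x' - y\<bar> \<le> lam * \<bar>x - y\<bar> + lam * \<bar>x - x'\<bar>"
    using assms(1) by (simp add: distrib_left[symmetric] mult_left_mono)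
  have shift: "0 \<le> 2 * c * \<bar>lam - lam'\<bar> / lam"
    using assms bound_nonneg by simp
  have at_x': "f x' \<le> lip_envelope f lam' x'"
    using lip_envelope_ge assms(2) by simp
  show "f y - lam * \<bar>x - y\<bar> \<le> lip_envelope f lam' x' + lam * \<bar>x - x'\<bar> + 2 * c * \<bar>lam - lam'\<bar> / lam"
  proof (cases "2 * c \<le> lam * \<bar>x' - y\<bar>")
    case True
    then show ?thesis
      using cone shift at_x' abs_le_bound[of y] abs_le_bound[of x'] by linarith
  next
    case False
    then have near: "\<bar>x' - y\<bar> \<le> 2 * c / lam"
      using assms(1) by (simp add: field_simps)
    have "(lam' - lam) * \<bar>x' - y\<bar> \<le> \<bar>lam - lam'\<bar> * \<bar>x' - y\<bar>"
      by (intro mult_right_mono) auto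
    also have "\<dots> \<le> \<bar>lam - lam'\<bar> * (2 * c / lam)"
      using near by (intro mult_left_mono) auto
    finally have "(lam' - lam) * \<bar>x' - y\<bar> \<le> \<bar>lam - lam'\<bar> * (2 * c / lam)" .
    then have "f y - lam * \<bar>x' - y\<bar> \<le> (f y - lam' * \<bar>x' - y\<bar>) + 2 * c * \<bar>lam - lam'\<bar> / lam"
      by (simp add: algebra_simps)
    moreover have "f y - lam' * \<bar>x' - y\<bar> \<le> lip_envelope f lam' x'"
      using lip_envelope_upper assms(2) by simp
    ultimately show ?thesis using cone by linarith
  qed
qed

lemma abs_lip_envelope_diff_le:
  assumes "l > 0" "l0 > 0"
  shows "\<bar>lip_envelope f l x - lip_envelope f l0 x0\<bar>
    \<le> (l + l0) * \<bar>x - x0\<bar> + 2 * c * \<bar>l - l0\<bar> / l + 2 * c * \<bar>l - l0\<bar> / l0"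
proof -
  have "0 \<le> l * \<bar>x - x0\<bar>" "0 \<le> l0 * \<bar>x - x0\<bar>"
    "0 \<le> 2 * c * \<bar>l - l0\<bar> / l" "0 \<le> 2 * c * \<bar>l - l0\<bar> / l0"
    using assms bound_nonneg by auto
  moreover note lip_envelope_le_shift[OF assms, of x x0] lip_envelope_le_shift[OF assms(2,1), of x0 x]
  ultimately show ?thesis
    unfolding abs_minus_commute[of x0 x] abs_minus_commute[of l0 l]
    by (simp add: abs_le_iff algebra_simps)
qed

lemma continuous_on_lip_envelope:
  "continuous_on (UNIV \<times> {0<..}) (\<lambda>p. lip_envelope f (snd p) (fst p))"
proof (rule continuous_on_eq_continuous_within[THEN iffD2], rule ballI)
  fix p0 :: "real \<times> real" assume "p0 \<in> UNIV \<times> {0<..}"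
  obtain x0 l0 where p0: "p0 = (x0, l0)" "l0 > 0"
    using \<open>p0 \<in> UNIV \<times> {0<..}\<close> by (cases p0) auto
  have l0_nz: "l0 \<noteq> 0"
    using p0(2) by simp
  define R where "R p = lip_envelope f (snd p) (fst p)" for p :: "real \<times> real"
  define b where "b p = (snd p + l0) * \<bar>fst p - x0\<bar> + 2 * c * \<bar>snd p - l0\<bar> / snd p
      + 2 * c * \<bar>snd p - l0\<bar> / l0" for p :: "real \<times> real"
  have bound: "norm (R p - R p0) \<le> b p" if "p \<in> UNIV \<times> {0<..}" for p
    using abs_lip_envelope_diff_le[of "snd p" l0 "fst p" x0] that p0
    by (simp add: R_def b_def mem_Times_iff)
  have "\<forall>\<^sub>F p in at p0 within UNIV \<times> {0<..}. norm (R p - R p0) \<le> b p"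
    unfolding eventually_at_filter by (intro always_eventually allI impI bound)
  moreover have "(b \<longlongrightarrow> b p0) (at p0 within UNIV \<times> {0<..})"
    unfolding b_def by (intro tendsto_intros) (simp_all add: p0(1) l0_nz)
  then have "(b \<longlongrightarrow> 0) (at p0 within UNIV \<times> {0<..})"
    by (simp add: b_def p0)
  ultimately have "((\<lambda>p. R p - R p0) \<longlongrightarrow> 0) (at p0 within UNIV \<times> {0<..})"
    by (rule Lim_null_comparison)
  then show "continuous (at p0 within UNIV \<times> {0<..}) R"
    unfolding continuous_within by (rule Lim_null[THEN iffD2])
qed

end

interpretation gap_sup: bounded_real_fun "gap_sup D" 1 for D
  by unfold_locales (rule abs_gap_sup_le)

definition side_envelope :: "real set \<Rightarrow> real \<Rightarrow> real \<Rightarrow> real \<Rightarrow> real" where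
  "side_envelope D s t x =
     (if t = s then gap_sup D x else lip_envelope (gap_sup D) (1 / \<bar>t - s\<bar>) x)"

lemma abs_side_envelope_le: "\<bar>side_envelope D s t x\<bar> \<le> 1"
  by (simp add: side_envelope_def abs_gap_sup_le gap_sup.abs_lip_envelope_le)

lemma mono_side_envelope: "mono (side_envelope D s t)"
  unfolding side_envelope_def by (cases "t = s") (simp_all add: mono_gap_sup gap_sup.mono_lip_envelope)

lemma side_envelope_eventually_eq:
  assumes "open D" "x0 \<in> D"
  obtains d where "d > 0"
    "\<And>x t. \<bar>x - x0\<bar> < d \<Longrightarrow> \<bar>t - s\<bar> < d \<Longrightarrow> side_envelope D s t x = gap_sup D x0"
proof -
  obtain e where e: "e > 0" "\<And>y. y \<in> ball x0 e \<Longrightarrow> gap_sup D y = gap_sup D x0"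
    using gap_sup_locally_const[OF assms] by blast
  have plateau: "gap_sup D y = gap_sup D x0" if "\<bar>y - x0\<bar> < 2 * (e / 2)" for y
  proof (rule e(2))
    show "y \<in> ball x0 e"
      using that by (simp add: dist_real_def abs_minus_commute)
  qed
  have "side_envelope D s t x = gap_sup D x0" if x: "\<bar>x - x0\<bar> < e / 4" and t: "\<bar>t - s\<bar> < e / 4" for x t
  proof (cases "t = s")
    case True
    have "gap_sup D x = gap_sup D x0"
      by (rule plateau) (use x e(1) in simp)
    with True show ?thesis
      by (simp add: side_envelope_def)
  next
    case False
    then have "0 < \<bar>t - s\<bar>"
      by simp
    then have slope: "2 * 1 / (e / 2) \<le> 1 / \<bar>t - s\<bar>"
      using t e(1) by (simp add: field_simps)
    have "\<bar>x - x0\<bar> < e / 2"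
      using x e(1) by simp
    then have "lip_envelope (gap_sup D) (1 / \<bar>t - s\<bar>) x = gap_sup D x0"
      using gap_sup.lip_envelope_eq_plateau[OF plateau _ slope] e(1) by simp
    then show ?thesis
      using False by (simp add: side_envelope_def)
  qed
  moreover have "e / 4 > 0"
    using e(1) by simp
  ultimately show ?thesis
    using that by blast
qed

lemma continuous_on_side_envelope:
  assumes "open D"
  shows "continuous_on (UNIV \<times> - {s} \<union> D \<times> {s}) (\<lambda>p. side_envelope D s (snd p) (fst p))"
proof (rule continuous_at_imp_continuous_on, rule ballI)
  fix p :: "real \<times> real" assume p: "p \<in> UNIV \<times> - {s} \<union> D \<times> {s}"
  show "isCont (\<lambda>p. side_envelope D s (snd p) (fst p)) p"
  proof (cases "snd p = s")
    case False
    have "continuous_on (UNIV \<times> - {s})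
        (\<lambda>q. (\<lambda>r. lip_envelope (gap_sup D) (snd r) (fst r)) (fst q, 1 / \<bar>snd q - s\<bar>))"
      by (rule continuous_on_compose2[OF gap_sup.continuous_on_lip_envelope])
        (auto intro!: continuous_intros)
    then have "continuous_on (UNIV \<times> - {s}) (\<lambda>p. side_envelope D s (snd p) (fst p))"
      by (rule continuous_on_eq) (auto simp: side_envelope_def)
    moreover have "open (UNIV \<times> - {s} :: (real \<times> real) set)"
      by (intro open_Times) auto
    moreover have "p \<in> UNIV \<times> - {s}"
      using False by (simp add: mem_Times_iff)
    ultimately show ?thesis
      using continuous_on_eq_continuous_at by blast
  next
    case True
    then obtain x0 where x0: "p = (x0, s)" "x0 \<in> D"
      using p by (cases p) auto
    obtain d where d: "d > 0"
      "\<And>x t. \<bar>x - x0\<bar> < d \<Longrightarrow> \<bar>t - s\<bar> < d \<Longrightarrow> side_envelope D s t x = gap_sup D x0"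
      using side_envelope_eventually_eq[OF assms x0(2)] by metis
    show ?thesis
    proof (rule continuous_transform_within[OF continuous_const d(1) UNIV_I])
      fix q :: "real \<times> real" assume "dist q p < d"
      then have "\<bar>fst q - x0\<bar> < d" "\<bar>snd q - s\<bar> < d"
        using dist_fst_le[of q p] dist_snd_le[of q p] by (auto simp: x0(1) dist_real_def)
      then show "gap_sup D x0 = side_envelope D s (snd q) (fst q)"
        using d(2) by simp
    qed
  qed
qed

section \<open>Strips with open sides\<close>

definition strip_of :: "real \<Rightarrow> real \<Rightarrow> real set \<Rightarrow> real set \<Rightarrow> (real \<times> real) set" where
  "strip_of u v A B = UNIV \<times> {u<..<v} \<union> A \<times> {u} \<union> B \<times> {v}"

definition strip_thickening :: "real \<Rightarrow> real \<Rightarrow> real set \<Rightarrow> real set \<Rightarrow> (real \<times> real) set" where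
  "strip_thickening u v A B = UNIV \<times> {u<..<v} \<union> A \<times> {..<v} \<union> B \<times> {u<..}"

lemma open_strip_thickening: "open A \<Longrightarrow> open B \<Longrightarrow> open (strip_thickening u v A B)"
  unfolding strip_thickening_def by (intro open_Un open_Times) auto

lemma strip_of_eq_Int: "u < v \<Longrightarrow> strip_of u v A B = (UNIV \<times> {u..v}) \<inter> strip_thickening u v A B"
  by (auto simp: strip_of_def strip_thickening_def)

lemma strip_of_subset_thickening: "u < v \<Longrightarrow> strip_of u v A B \<subseteq> strip_thickening u v A B"
  by (auto simp: strip_of_def strip_thickening_def)

lemma clamp_strip_thickening:
  assumes "u < v" "p \<in> strip_thickening u v A B"
  shows "(fst p, max u (min v (snd p))) \<in> strip_of u v A B"
proof -
  obtain x t where p: "p = (x, t)"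
    by (cases p)
  consider "t \<le> u" | "v \<le> t" | "u < t" "t < v"
    by linarith
  then show ?thesis
  proof cases
    case 1
    then have "x \<in> A" "max u (min v t) = u"
      using assms p by (auto simp: strip_thickening_def)
    then show ?thesis
      using p by (simp add: strip_of_def)
  next
    case 2
    then have "x \<in> B" "max u (min v t) = v"
      using assms p by (auto simp: strip_thickening_def)
    then show ?thesis
      using p by (simp add: strip_of_def)
  next
    case 3
    then show ?thesis
      using p by (simp add: strip_of_def)
  qed
qed

lemma is_strip_strip_of:
  assumes "u < v" "open A" "open B"
  shows "is_strip u v (strip_of u v A B)"
proof -
  have "openin (top_of_set (UNIV \<times> {u..v})) ((UNIV \<times> {u..v}) \<inter> strip_thickening u v A B)"
    by (rule openin_open_Int[OF open_strip_thickening[OF assms(2,3)]])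
  moreover have "UNIV \<times> {u<..<v} \<subseteq> strip_of u v A B" "strip_of u v A B \<subseteq> UNIV \<times> {u..v}"
    using assms(1) by (auto simp: strip_of_def)
  ultimately show ?thesis
    using assms(1) by (simp add: is_strip_def strip_of_eq_Int)
qed

lemma is_strip_imp_strip_of:
  assumes "is_strip u v S"
  shows "S = strip_of u v {x. (x, u) \<in> S} {x. (x, v) \<in> S}"
    and "open {x. (x, u) \<in> S}" and "open {x. (x, v) \<in> S}"
proof -
  have uv: "u < v" and "UNIV \<times> {u<..<v} \<subseteq> S" "S \<subseteq> UNIV \<times> {u..v}"
    using assms by (auto simp: is_strip_def)
  have mem: "(x, t) \<in> S \<longleftrightarrow> (x, t) \<in> strip_of u v {x. (x, u) \<in> S} {x. (x, v) \<in> S}" for x t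
  proof (cases "u < t \<and> t < v")
    case True
    then show ?thesis
      using \<open>UNIV \<times> {u<..<v} \<subseteq> S\<close> by (auto simp: strip_of_def)
  next
    case False
    then show ?thesis
      using \<open>S \<subseteq> UNIV \<times> {u..v}\<close> by (auto simp: strip_of_def)
  qed
  show "S = strip_of u v {x. (x, u) \<in> S} {x. (x, v) \<in> S}"
  proof (rule set_eqI)
    fix p
    show "p \<in> S \<longleftrightarrow> p \<in> strip_of u v {x. (x, u) \<in> S} {x. (x, v) \<in> S}"
      using mem[of "fst p" "snd p"] by (simp only: prod.collapse)
  qed
  obtain T where T: "open T" "S = (UNIV \<times> {u..v}) \<inter> T"
    using assms by (auto simp: is_strip_def openin_open)
  have "{x. (x, u) \<in> S} = (\<lambda>x. (x, u)) -` T" "{x. (x, v) \<in> S} = (\<lambda>x. (x, v)) -` T"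
    using T(2) uv by auto
  moreover have "isCont (\<lambda>x. (x, s)) x" for s x :: real
    by (intro continuous_intros)
  ultimately show "open {x. (x, u) \<in> S}" "open {x. (x, v) \<in> S}"
    by (simp_all add: continuous_open_vimage T(1))
qed

lemma strip_boundary_strip_of: "u < v \<Longrightarrow> strip_boundary u v (strip_of u v A B) = A \<times> {u} \<union> B \<times> {v}"
  by (auto simp: strip_boundary_def lower_boundary_def upper_boundary_def strip_of_def)

lemma components_Times_singleton: "components (A \<times> {s}) = (\<lambda>C. C \<times> {s}) ` components A"
proof -
  have "homeomorphism A (A \<times> {s}) (\<lambda>x. (x, s)) fst"
    by (intro homeomorphismI continuous_intros) auto
  then have "components (A \<times> {s}) = image (\<lambda>x. (x, s)) ` components A"
    by (rule components_homeomorphic_image)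
  also have "\<dots> = (\<lambda>C. C \<times> {s}) ` components A"
    by (rule image_cong[OF refl]) auto
  finally show ?thesis .
qed

lemma connected_subset_two_lines:
  fixes X :: "('a::metric_space \<times> 'b::metric_space) set"
  assumes "connected X" "X \<subseteq> UNIV \<times> {u, v}"
  shows "X \<subseteq> UNIV \<times> {u} \<or> X \<subseteq> UNIV \<times> {v}"
proof (cases "X = {}")
  case False
  then obtain p where p: "p \<in> X"
    by blast
  have "continuous_on X snd"
    using continuous_on_snd[OF continuous_on_id] by (simp add: id_def)
  then have "connected (snd ` X)"
    using assms(1) by (rule connected_continuous_image)
  moreover have "finite (snd ` X)"
    by (rule finite_subset[of _ "{u, v}"]) (use assms(2) in auto)
  ultimately have "snd ` X = {} \<or> (\<exists>a. snd ` X = {a})"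
    by (simp add: connected_finite_iff_sing)
  then obtain a where "snd ` X = {a}"
    using p by blast
  have "X \<subseteq> UNIV \<times> {a}"
  proof
    fix q assume "q \<in> X"
    then have "snd q \<in> {a}"
      using \<open>snd ` X = {a}\<close> by blast
    then show "q \<in> UNIV \<times> {a}"
      by (simp add: mem_Times_iff)
  qed
  moreover have "a = snd p"
    using imageI[OF p, of snd] \<open>snd ` X = {a}\<close> by simp
  then have "a \<in> {u, v}"
    using subsetD[OF assms(2) p] by (simp add: mem_Times_iff)
  ultimately show ?thesis
    by auto
qed simp

lemma components_of_saturated_subset:
  assumes Y: "Y \<in> components S" and "S \<subseteq> K"
    and saturated: "\<And>X. X \<in> components K \<Longrightarrow> X \<inter> S \<noteq> {} \<Longrightarrow> X \<subseteq> S"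
  shows "Y \<in> components K"
proof -
  have "Y \<subseteq> K" "Y \<noteq> {}" "connected Y"
    using Y assms(2) in_components_subset in_components_nonempty in_components_connected by blast+
  then obtain X where X: "X \<in> components K" "Y \<subseteq> X"
    using exists_component_superset by blast
  then have "X \<subseteq> S"
    using saturated \<open>Y \<noteq> {}\<close> in_components_subset[OF Y] by blast
  then have "X \<subseteq> Y"
    using components_maximal[OF Y in_components_connected[OF X(1)]] X(2) \<open>Y \<noteq> {}\<close> by blast
  then show ?thesis
    using X by auto
qed

lemma components_two_lines:
  fixes A B :: "'a::metric_space set" and u v :: "'b::metric_space"
  assumes "u \<noteq> v"
  shows "components (A \<times> {u} \<union> B \<times> {v}) = components (A \<times> {u}) \<union> components (B \<times> {v})"
proof -
  let ?K = "A \<times> {u} \<union> B \<times> {v}"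
  have lines: "?K \<inter> UNIV \<times> {u} = A \<times> {u}" "?K \<inter> UNIV \<times> {v} = B \<times> {v}"
    and disjoint: "A \<times> {u} \<inter> B \<times> {v} = {}"
    using assms by auto
  have on_line: "X \<subseteq> A \<times> {u} \<or> X \<subseteq> B \<times> {v}" if X: "X \<in> components ?K" for X
  proof -
    have "X \<subseteq> ?K"
      using X by (rule in_components_subset)
    moreover have "?K \<subseteq> UNIV \<times> {u, v}"
      by auto
    ultimately have "X \<subseteq> UNIV \<times> {u} \<or> X \<subseteq> UNIV \<times> {v}"
      using connected_subset_two_lines[OF in_components_connected[OF X]] by blast
    then show ?thesis
    proof
      assume "X \<subseteq> UNIV \<times> {u}"
      then have "X \<subseteq> ?K \<inter> UNIV \<times> {u}"
        using \<open>X \<subseteq> ?K\<close> by (rule Int_greatest[rotated])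
      then show ?thesis
        using lines(1) by simp
    next
      assume "X \<subseteq> UNIV \<times> {v}"
      then have "X \<subseteq> ?K \<inter> UNIV \<times> {v}"
        using \<open>X \<subseteq> ?K\<close> by (rule Int_greatest[rotated])
      then show ?thesis
        using lines(2) by simp
    qed
  qed
  have saturated: "X \<subseteq> S" if "X \<in> components ?K" "X \<inter> S \<noteq> {}" "S = A \<times> {u} \<or> S = B \<times> {v}" for X S
    using on_line[OF that(1)] that(2,3) disjoint by blast
  show ?thesis
  proof (intro equalityI subsetI)
    fix X assume X: "X \<in> components ?K"
    then show "X \<in> components (A \<times> {u}) \<union> components (B \<times> {v})"
      using on_line[OF X] components_intermediate_subset[OF X] by blast
  next
    fix Y assume "Y \<in> components (A \<times> {u}) \<union> components (B \<times> {v})"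
    then obtain S where Y: "Y \<in> components S" and S: "S = A \<times> {u} \<or> S = B \<times> {v}"
      by blast
    show "Y \<in> components ?K"
    proof (rule components_of_saturated_subset[OF Y])
      show "S \<subseteq> ?K"
        using S by blast
      show "X \<subseteq> S" if "X \<in> components ?K" "X \<inter> S \<noteq> {}" for X
        using saturated[OF that S] .
    qed
  qed
qed

lemma boundary_intervals_strip_of:
  assumes "u < v"
  shows "boundary_intervals u v (strip_of u v A B)
    = (\<lambda>C. C \<times> {u}) ` components A \<union> (\<lambda>C. C \<times> {v}) ` components B"
  using assms
  by (simp add: boundary_intervals_def strip_boundary_strip_of components_two_lines components_Times_singleton)

lemma pairwise_disjoint_closure_lines:
  fixes A B :: "real set" and u v :: real
  assumes "u \<noteq> v"
    and sepA: "pairwise (\<lambda>I J. closure I \<inter> closure J = {}) (components A)"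
    and sepB: "pairwise (\<lambda>I J. closure I \<inter> closure J = {}) (components B)"
  shows "pairwise (\<lambda>I J. closure I \<inter> closure J = {})
    ((\<lambda>C. C \<times> {u}) ` components A \<union> (\<lambda>C. C \<times> {v}) ` components B)"
proof (rule pairwiseI)
  fix I J
  assume I: "I \<in> (\<lambda>C. C \<times> {u}) ` components A \<union> (\<lambda>C. C \<times> {v}) ` components B"
    and J: "J \<in> (\<lambda>C. C \<times> {u}) ` components A \<union> (\<lambda>C. C \<times> {v}) ` components B" and "I \<noteq> J"
  obtain C s where C: "I = C \<times> {s}" "s = u \<and> C \<in> components A \<or> s = v \<and> C \<in> components B"
    using I by blast
  obtain C' s' where C': "J = C' \<times> {s'}" "s' = u \<and> C' \<in> components A \<or> s' = v \<and> C' \<in> components B"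
    using J by blast
  have "s \<noteq> s' \<or> closure C \<inter> closure C' = {}"
  proof (cases "s = s'")
    case True
    then have "C \<noteq> C'"
      using \<open>I \<noteq> J\<close> C(1) C'(1) by blast
    from C(2) C'(2) True assms(1) consider
        "C \<in> components A" "C' \<in> components A" | "C \<in> components B" "C' \<in> components B"
      by blast
    then show ?thesis
    proof cases
      case 1
      then show ?thesis using pairwiseD[OF sepA 1 \<open>C \<noteq> C'\<close>] by simp
    next
      case 2
      then show ?thesis using pairwiseD[OF sepB 2 \<open>C \<noteq> C'\<close>] by simp
    qed
  qed simp
  then show "closure I \<inter> closure J = {}"
    using C(1) C'(1) by (auto simp: closure_Times)
qed

lemma is_model_strip_strip_of:
  assumes "u < v" "open A" "open B" "bounded A" "bounded B"
    and "pairwise (\<lambda>I J. closure I \<inter> closure J = {}) (components A)"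
    and "pairwise (\<lambda>I J. closure I \<inter> closure J = {}) (components B)"
  shows "is_model_strip u v (strip_of u v A B)"
  unfolding is_model_strip_def boundary_intervals_strip_of[OF assms(1)]
proof (intro conjI ballI impI)
  show "is_strip u v (strip_of u v A B)"
    using assms(1-3) by (rule is_strip_strip_of)
next
  fix I assume "I \<in> (\<lambda>C. C \<times> {u}) ` components A \<union> (\<lambda>C. C \<times> {v}) ` components B"
  then show "bounded I"
    using assms(4,5) in_components_subset by (auto intro!: bounded_Times intro: bounded_subset)
next
  fix I J
  assume "I \<in> (\<lambda>C. C \<times> {u}) ` components A \<union> (\<lambda>C. C \<times> {v}) ` components B"
    and "J \<in> (\<lambda>C. C \<times> {u}) ` components A \<union> (\<lambda>C. C \<times> {v}) ` components B" and "I \<noteq> J"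
  then show "closure I \<inter> closure J = {}"
    using pairwiseD[OF pairwise_disjoint_closure_lines[OF less_imp_neq[OF assms(1)] assms(6,7)]] by blast
qed

section \<open>Straightening a strip\<close>

locale strip_sides =
  fixes u v :: real and A B :: "real set"
  assumes less: "u < v" and open_A: "open A" and open_B: "open B"
begin

definition model_coord :: "real \<Rightarrow> real \<Rightarrow> real" where
  "model_coord t x = squash x + (v - t) / (v - u) * side_envelope A u t x
     + (t - u) / (v - u) * side_envelope B v t x + (t - u) * (v - t) * x"

lemma model_coord_lower: "model_coord u = edge_map A"
  using less by (intro ext) (simp add: model_coord_def side_envelope_def edge_map_def)

lemma model_coord_upper: "model_coord v = edge_map B"
  using less by (intro ext) (simp add: model_coord_def side_envelope_def edge_map_def)

lemma strict_mono_model_coord: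
  assumes "t \<in> {u..v}"
  shows "strict_mono (model_coord t)"
proof (rule strict_monoI)
  fix x y :: real assume "x < y"
  have coeffs: "0 \<le> (v - t) / (v - u)" "0 \<le> (t - u) / (v - u)" "0 \<le> (t - u) * (v - t)"
    using assms less by auto
  have "(v - t) / (v - u) * side_envelope A u t x \<le> (v - t) / (v - u) * side_envelope A u t y"
    using coeffs(1) monoD[OF mono_side_envelope] \<open>x < y\<close> by (intro mult_left_mono) auto
  moreover have "(t - u) / (v - u) * side_envelope B v t x \<le> (t - u) / (v - u) * side_envelope B v t y"
    using coeffs(2) monoD[OF mono_side_envelope] \<open>x < y\<close> by (intro mult_left_mono) auto
  moreover have "(t - u) * (v - t) * x \<le> (t - u) * (v - t) * y"
    using coeffs(3) \<open>x < y\<close> by (intro mult_left_mono) auto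
  moreover have "squash x < squash y"
    using strict_monoD[OF strict_mono_squash \<open>x < y\<close>] .
  ultimately show "model_coord t x < model_coord t y"
    unfolding model_coord_def by linarith
qed

lemma model_coord_near_linear:
  assumes "t \<in> {u..v}"
  shows "\<bar>model_coord t x - (t - u) * (v - t) * x\<bar> \<le> 3"
proof -
  have coeffs: "0 \<le> (v - t) / (v - u)" "(v - t) / (v - u) \<le> 1" "0 \<le> (t - u) / (v - u)" "(t - u) / (v - u) \<le> 1"
    using assms less by auto
  have "\<bar>(v - t) / (v - u) * side_envelope A u t x\<bar> = (v - t) / (v - u) * \<bar>side_envelope A u t x\<bar>"
    by (simp only: abs_mult abs_of_nonneg[OF coeffs(1)])
  also have "\<dots> \<le> 1"
    by (rule mult_le_one[OF coeffs(2) abs_ge_zero abs_side_envelope_le])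
  finally have lower: "\<bar>(v - t) / (v - u) * side_envelope A u t x\<bar> \<le> 1" .
  have "\<bar>(t - u) / (v - u) * side_envelope B v t x\<bar> = (t - u) / (v - u) * \<bar>side_envelope B v t x\<bar>"
    by (simp only: abs_mult abs_of_nonneg[OF coeffs(3)])
  also have "\<dots> \<le> 1"
    by (rule mult_le_one[OF coeffs(4) abs_ge_zero abs_side_envelope_le])
  finally have upper: "\<bar>(t - u) / (v - u) * side_envelope B v t x\<bar> \<le> 1" .
  show ?thesis
    using lower upper abs_squash_less[of x] unfolding model_coord_def by linarith
qed

lemma continuous_on_model_coord:
  "continuous_on (strip_of u v A B) (\<lambda>p. model_coord (snd p) (fst p))"
proof -
  have "strip_of u v A B \<subseteq> UNIV \<times> - {u} \<union> A \<times> {u}" "strip_of u v A B \<subseteq> UNIV \<times> - {v} \<union> B \<times> {v}"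
    using less by (auto simp: strip_of_def)
  then have envelopes: "continuous_on (strip_of u v A B) (\<lambda>p. side_envelope A u (snd p) (fst p))"
    "continuous_on (strip_of u v A B) (\<lambda>p. side_envelope B v (snd p) (fst p))"
    using continuous_on_subset[OF continuous_on_side_envelope[OF open_A]]
      continuous_on_subset[OF continuous_on_side_envelope[OF open_B]] by blast+
  have "continuous_on (strip_of u v A B) (\<lambda>p. squash (fst p))"
    by (rule continuous_on_compose2[OF continuous_on_squash[of UNIV]]) (auto intro: continuous_intros)
  then show ?thesis
    unfolding model_coord_def by (intro continuous_intros envelopes) (use less in auto)
qed

lemma surj_model_coord:
  assumes "u < t" "t < v"
  shows "surj (model_coord t)"
proof -
  have "continuous_on UNIV (\<lambda>x. (x, t))"
    by (intro continuous_intros)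
  moreover have "(\<lambda>x. (x, t)) ` UNIV \<subseteq> strip_of u v A B"
    using assms by (auto simp: strip_of_def)
  ultimately have "continuous_on UNIV ((\<lambda>p. model_coord (snd p) (fst p)) \<circ> (\<lambda>x. (x, t)))"
    using continuous_on_compose continuous_on_subset[OF continuous_on_model_coord] by blast
  then have cont: "continuous_on UNIV (model_coord t)"
    by (simp add: o_def)
  have w: "(t - u) * (v - t) > 0"
    using assms by simp
  show ?thesis
  proof (rule surjI)
    fix y
    define a where "a = (y - 3) / ((t - u) * (v - t))"
    define b where "b = (y + 3) / ((t - u) * (v - t))"
    have "model_coord t a \<le> y" "y \<le> model_coord t b"
      using model_coord_near_linear[of t a] model_coord_near_linear[of t b] assms w
      by (auto simp: a_def b_def abs_le_iff)
    moreover have "a \<le> b"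
      using w by (simp add: a_def b_def divide_right_mono)
    ultimately have "\<exists>x. a \<le> x \<and> x \<le> b \<and> model_coord t x = y"
      using IVT'[of "model_coord t" a y b] cont by (auto intro: continuous_on_subset)
    then show "model_coord t (SOME x. model_coord t x = y) = y"
      by (metis (mono_tags, lifting) someI)
  qed
qed

text \<open>Clamping the level extends \<open>model_map\<close> injectively and continuously to the open set
  \<open>strip_thickening u v A B\<close>, where invariance of domain applies.\<close>
definition model_map :: "real \<times> real \<Rightarrow> real \<times> real" where
  "model_map p = (model_coord (max u (min v (snd p))) (fst p), snd p)"

lemma model_map_eq: "snd p \<in> {u..v} \<Longrightarrow> model_map p = (model_coord (snd p) (fst p), snd p)"
  by (simp add: model_map_def min_absorb2 max_absorb2)

lemma homeomorphism_model_map: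
  obtains g where "homeomorphism (strip_of u v A B) (model_map ` strip_of u v A B) model_map g"
proof -
  let ?N = "strip_thickening u v A B"
  let ?clamp = "\<lambda>p. (fst p, max u (min v (snd p)))"
  have "continuous_on ?N ?clamp"
    by (intro continuous_intros)
  moreover have "?clamp ` ?N \<subseteq> strip_of u v A B"
    using clamp_strip_thickening[OF less] by blast
  ultimately have "continuous_on ?N (\<lambda>p. model_coord (snd (?clamp p)) (fst (?clamp p)))"
    by (rule continuous_on_compose2[OF continuous_on_model_coord])
  then have cont: "continuous_on ?N model_map"
    unfolding model_map_def by (intro continuous_intros) simp
  have inj: "inj_on model_map ?N"
  proof (rule inj_onI)
    fix p q assume eq: "model_map p = model_map q"
    then have "snd p = snd q"
      by (simp add: model_map_def)
    then have "model_coord (max u (min v (snd q))) (fst p) = model_coord (max u (min v (snd q))) (fst q)"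
      using eq by (simp add: model_map_def)
    moreover have "max u (min v (snd q)) \<in> {u..v}"
      using less by auto
    ultimately have "fst p = fst q"
      using strict_mono_eq[OF strict_mono_model_coord] by blast
    then show "p = q"
      using \<open>snd p = snd q\<close> by (simp add: prod_eq_iff)
  qed
  obtain g where "homeomorphism ?N (model_map ` ?N) model_map g"
    by (rule invariance_of_domain_homeomorphism[OF open_strip_thickening[OF open_A open_B] cont order_refl inj])
  then have "homeomorphism (strip_of u v A B) (model_map ` strip_of u v A B) model_map g"
    by (rule homeomorphism_of_subsets) (use strip_of_subset_thickening[OF less] in auto)
  then show ?thesis
    by (rule that)
qed

lemma model_map_line:
  assumes "u < t" "t < v"
  shows "model_map ` (UNIV \<times> {t}) = UNIV \<times> {t}"
proof -
  have line: "UNIV \<times> {t} = (\<lambda>x. (x, t)) ` UNIV"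
    by auto
  have "model_map ` (UNIV \<times> {t}) = (\<lambda>x. model_map (x, t)) ` UNIV"
    unfolding line by (simp only: image_image)
  also have "\<dots> = (\<lambda>x. (model_coord t x, t)) ` UNIV"
    using assms by (simp add: model_map_eq)
  also have "\<dots> = range (model_coord t) \<times> {t}"
    by auto
  finally show ?thesis
    using surj_model_coord[OF assms] by simp
qed

lemma model_map_lower: "model_map ` (C \<times> {u}) = edge_map A ` C \<times> {u}"
  using less by (force simp: model_map_eq model_coord_lower)

lemma model_map_upper: "model_map ` (C \<times> {v}) = edge_map B ` C \<times> {v}"
  using less by (force simp: model_map_eq model_coord_upper)

lemma model_map_image: "model_map ` strip_of u v A B = strip_of u v (edge_map A ` A) (edge_map B ` B)"
proof -
  have "model_map ` (UNIV \<times> {u<..<v}) = (\<Union>t\<in>{u<..<v}. model_map ` (UNIV \<times> {t}))"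
    by (auto simp: image_UN[symmetric])
  also have "\<dots> = (\<Union>t\<in>{u<..<v}. UNIV \<times> {t})"
    by (rule SUP_cong[OF refl]) (simp add: model_map_line)
  also have "\<dots> = UNIV \<times> {u<..<v}"
    by auto
  finally show ?thesis
    by (simp add: strip_of_def image_Un model_map_lower model_map_upper)
qed

lemma is_model_strip_model_map_image: "is_model_strip u v (model_map ` strip_of u v A B)"
  unfolding model_map_image
  using less open_A open_B
  by (intro is_model_strip_strip_of open_edge_map_image bounded_edge_map_image
      pairwise_disjoint_closure_edge_components)

lemma foliated_homeomorphism_model_map:
  "foliated_homeomorphism (canonical_leaves u v (strip_of u v A B))
     (canonical_leaves u v (model_map ` strip_of u v A B)) (strip_of u v A B) (model_map ` strip_of u v A B) model_map"
  unfolding foliated_homeomorphism_def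
proof (intro conjI ballI)
  show "\<exists>g. homeomorphism (strip_of u v A B) (model_map ` strip_of u v A B) model_map g"
    using homeomorphism_model_map by metis
next
  fix L assume "L \<in> canonical_leaves u v (strip_of u v A B)"
  then consider t where "L = UNIV \<times> {t}" "u < t" "t < v"
    | C where "L = C \<times> {u}" "C \<in> components A" | C where "L = C \<times> {v}" "C \<in> components B"
    unfolding canonical_leaves_def boundary_intervals_strip_of[OF less] by blast
  then show "model_map ` L \<in> canonical_leaves u v (model_map ` strip_of u v A B)"
    unfolding canonical_leaves_def model_map_image boundary_intervals_strip_of[OF less]
      components_edge_map_image[OF open_A] components_edge_map_image[OF open_B]
    by cases (auto simp: model_map_line model_map_lower model_map_upper)
qed

end

theorem mainTheorem1:
  fixes S :: "(real \<times> real) set" and u v :: real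
  assumes "is_strip u v S"
  shows "\<exists>u' v' S' h. is_model_strip u' v' S'
           \<and> foliated_homeomorphism (canonical_leaves u v S) (canonical_leaves u' v' S') S S' h"
proof -
  let ?A = "{x. (x, u) \<in> S}" and ?B = "{x. (x, v) \<in> S}"
  have "u < v"
    using assms by (simp add: is_strip_def)
  then interpret strip_sides u v ?A ?B
    using is_strip_imp_strip_of[OF assms] by unfold_locales
  have "S = strip_of u v ?A ?B"
    by (rule is_strip_imp_strip_of[OF assms])
  then show ?thesis
    using is_model_strip_model_map_image foliated_homeomorphism_model_map by metis
qed

end
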